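(* Let $T$ be a forest without isolated vertices of order at least $3$, and let $P_T$ be the set of pendant vertices of $T$ that are adjacent to a vertex of degree at least $2$. Then there is a $\delta$-sequence $\{\mathcal T_i\}_{i=1}^s$ of $T$ such that $\tilde z_i(T)\ge 0$ for all $2\le i\le s$ and $\tilde z_s(T)\ge |P_T|-|N_T(P_T)|$.
   Context: $N_T(S)$ denotes the set of all neighbours of vertices of $S$ in $T$; a pendant vertex is a vertex of degree 1. $G+H$ denotes disjoint union, $mK_1$ the edgeless graph on $m$ vertices, $K_r$ the complete graph. $\delta$-sequence: Let $G$ have order $p$ with $1\le\delta(G)\le p-2$. Set $\mathcal G_1=G_1=G$, $m_1=0$. For each $i$, write $\mathcal G_i=m_iK_1+G_i$, where $m_i\ge0$ is the number of isolated vertices of $\mathcal G_i$ and $G_i$ has no isolated vertices; put $\delta_i=\delta(G_i)$. If $\mathcal G_i$ is neither of the form $mK_1$ ($m\ge1$) nor $mK_1+K_r$ ($m\ge0$, $r\ge2$), choose a vertex $u_i$ of $G_i$ with $\deg_{G_i}(u_i)=\delta_i$ and let $\mathcal G_{i+1}$ be obtained from $G_i$ by deleting $u_i$ together with all its neighbours in $G_i$. Stop at the first index $s$ ($s\ge2$) for which $\mathcal G_s$ is $m_sK_1$ with $m_s\ge1$ (then set $\delta_s=0$) or $m_sK_1+K_r$ with $m_s\ge0$, $r\ge2$ (then $\delta_s=r-1$). The resulting $\{\mathcal G_i\}_{i=1}^s$ is a $\delta$-sequence of $G$. Define $\tilde y_j(G)=m_j+1-\delta_j$ for $1\le j\le s$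 and $\tilde z_i(G)=\sum_{j=2}^i\tilde y_j(G)$. *)

theory Defs
  imports Main
begin

text \<open>Subgraphs occurring in a delta-sequence
are induced subgraphs, represented by their vertex sets S.\<close>

definition simple_graph :: "'a set \<Rightarrow> ('a \<Rightarrow> 'a \<Rightarrow> bool) \<Rightarrow> bool" where
  "simple_graph V E \<longleftrightarrow> finite V \<and> (\<forall>v w. E v w \<longrightarrow> E w v) \<and> (\<forall>v. \<not> E v v)
     \<and> (\<forall>v w. E v w \<longrightarrow> v \<in> V \<and> w \<in> V)"

definition is_cycle :: "'a set \<Rightarrow> ('a \<Rightarrow> 'a \<Rightarrow> bool) \<Rightarrow> 'a list \<Rightarrow> bool" where
  "is_cycle V E cs \<longleftrightarrow> length cs \<ge> 3 \<and> distinct cs \<and> set cs \<subseteq> V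
     \<and> (\<forall>i. Suc i < length cs \<longrightarrow> E (cs ! i) (cs ! Suc i)) \<and> E (last cs) (hd cs)"

definition forest :: "'a set \<Rightarrow> ('a \<Rightarrow> 'a \<Rightarrow> bool) \<Rightarrow> bool" where
  "forest V E \<longleftrightarrow> simple_graph V E \<and> (\<nexists>cs. is_cycle V E cs)"

definition deg :: "('a \<Rightarrow> 'a \<Rightarrow> bool) \<Rightarrow> 'a set \<Rightarrow> 'a \<Rightarrow> nat" where
  "deg E S v = card {w \<in> S. E v w}"

definition nbhd :: "'a set \<Rightarrow> ('a \<Rightarrow> 'a \<Rightarrow> bool) \<Rightarrow> 'a set \<Rightarrow> 'a set" where
  "nbhd V E S = {w \<in> V. \<exists>v \<in> S. E v w}"

definition P_set :: "'a set \<Rightarrow> ('a \<Rightarrow> 'a \<Rightarrow> bool) \<Rightarrow> 'a set" where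
  "P_set V E = {v \<in> V. deg E V v = 1 \<and> (\<exists>w \<in> V. E v w \<and> deg E V w \<ge> 2)}"

text \<open>For the induced subgraph on S (= calligraphic G_i): its isolated vertices,
their number m_i, the part G_i without isolated vertices, and delta_i.\<close>
definition isol :: "('a \<Rightarrow> 'a \<Rightarrow> bool) \<Rightarrow> 'a set \<Rightarrow> 'a set" where
  "isol E S = {v \<in> S. deg E S v = 0}"

definition mnum :: "('a \<Rightarrow> 'a \<Rightarrow> bool) \<Rightarrow> 'a set \<Rightarrow> nat" where
  "mnum E S = card (isol E S)"

definition core :: "('a \<Rightarrow> 'a \<Rightarrow> bool) \<Rightarrow> 'a set \<Rightarrow> 'a set" where
  "core E S = S - isol E S"

text \<open>delta_i = delta(G_i); for terminal graphs this equals 0 (for m K_1) resp. r-1 (for m K_1 + K_r).\<close>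
definition dlt :: "('a \<Rightarrow> 'a \<Rightarrow> bool) \<Rightarrow> 'a set \<Rightarrow> nat" where
  "dlt E S = (if core E S = {} then 0 else Min (deg E (core E S) ` core E S))"

text \<open>Terminal forms: m K_1 with m \<ge> 1, or m K_1 + K_r with r \<ge> 2.\<close>
definition terminal :: "('a \<Rightarrow> 'a \<Rightarrow> bool) \<Rightarrow> 'a set \<Rightarrow> bool" where
  "terminal E S \<longleftrightarrow> (S \<noteq> {} \<and> core E S = {})
     \<or> (card (core E S) \<ge> 2 \<and> (\<forall>v \<in> core E S. \<forall>w \<in> core E S. v \<noteq> w \<longrightarrow> E v w))"

definition dstep :: "('a \<Rightarrow> 'a \<Rightarrow> bool) \<Rightarrow> 'a set \<Rightarrow> 'a set \<Rightarrow> bool" where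
  "dstep E S S' \<longleftrightarrow> (\<exists>u \<in> core E S. deg E (core E S) u = dlt E S
       \<and> S' = core E S - ({u} \<union> {w \<in> core E S. E u w}))"

text \<open>A delta-sequence [calG_1, ..., calG_s] (list index k corresponds to i = k+1).\<close>
definition delta_seq :: "'a set \<Rightarrow> ('a \<Rightarrow> 'a \<Rightarrow> bool) \<Rightarrow> 'a set list \<Rightarrow> bool" where
  "delta_seq V E Ss \<longleftrightarrow>
     1 \<le> dlt E V \<and> dlt E V + 2 \<le> card V \<and>
     length Ss \<ge> 2 \<and> Ss ! 0 = V \<and>
     (\<forall>k. Suc k < length Ss \<longrightarrow> \<not> terminal E (Ss ! k) \<and> dstep E (Ss ! k) (Ss ! Suc k)) \<and>
     terminal E (last Ss)"

definition ytil :: "('a \<Rightarrow> 'a \<Rightarrow> bool) \<Rightarrow> 'a set list \<Rightarrow> nat \<Rightarrow> int" where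
  "ytil E Ss j = int (mnum E (Ss ! (j - 1))) + 1 - int (dlt E (Ss ! (j - 1)))"

definition ztil :: "('a \<Rightarrow> 'a \<Rightarrow> bool) \<Rightarrow> 'a set list \<Rightarrow> nat \<Rightarrow> int" where
  "ztil E Ss i = (\<Sum>j = 2..i. ytil E Ss j)"

end

theory Submission
  imports Defs
begin

(*
  In a forest every nonempty induced subgraph has a vertex of degree at most 1. Hence every
  non-terminal graph of a delta-sequence has delta_i = 1: a step deletes a leaf u together
  with its unique neighbour w, and y~_i = m_i + 1 - delta_i >= m_i >= 0 throughout (a
  terminal clique of a forest has at most two vertices).

  For a graph C without isolated vertices let e(C) = |P| - |N_C(P)|, P the pendant vertices
  of C adjacent to a vertex of degree at least 2. Deleting u and w lowers e by at most
  m_{i+1}: the other pendant vertices at w become isolated and pay for w leaving N(P), and a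
  pendant vertex elsewhere stops being pendant only when its neighbour turns into a leaf, so
  that both leave P and N(P) together. Hence e(C_i) <= m_{i+1} + e(C_{i+1}); since a
  terminal graph has no such pendant vertices, summing gives z~_s >= e(T).
*)

lemma is_cycle_iff:
  "is_cycle V E cs \<longleftrightarrow> 3 \<le> length cs \<and> distinct cs \<and> set cs \<subseteq> V \<and> successively E cs
     \<and> E (last cs) (hd cs)"
  by (simp add: is_cycle_def successively_conv_nth)

lemma successively_take: "successively P xs \<Longrightarrow> successively P (take n xs)"
  by (metis append_take_drop_id successively_append_iff)

lemma mem_core_iff: "v \<in> core E S \<longleftrightarrow> v \<in> S \<and> deg E S v \<noteq> 0"
  by (auto simp: core_def isol_def)

lemma core_subset: "core E S \<subseteq> S"
  by (auto simp: core_def)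

lemma terminal_clique:
  assumes "terminal E S" "v \<in> core E S" "v' \<in> core E S" "v \<noteq> v'"
  shows "E v v'"
  using assms by (auto simp: terminal_def)

definition excess :: "('a \<Rightarrow> 'a \<Rightarrow> bool) \<Rightarrow> 'a set \<Rightarrow> 'a set \<Rightarrow> int" where
  "excess E X A = int (card A) - int (card (nbhd X E A))"

lemma nbhd_Un: "nbhd X E (A \<union> B) = nbhd X E A \<union> nbhd X E B"
  by (auto simp: nbhd_def)

lemma nbhd_eq_UN: "nbhd X E A = (\<Union>x\<in>A. {z \<in> X. E x z})"
  by (auto simp: nbhd_def)

lemma excess_mono:
  assumes "finite A" "A' \<subseteq> A" and deg_A: "\<And>x. x \<in> A \<Longrightarrow> deg E X x \<le> 1"
  shows "excess E X A' \<le> excess E X A"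
proof -
  have "card (nbhd X E (A - A')) \<le> (\<Sum>x\<in>A - A'. card {z \<in> X. E x z})"
    unfolding nbhd_eq_UN using assms(1) by (intro card_UN_le) simp
  also have "\<dots> \<le> (\<Sum>x\<in>A - A'. 1)"
    using deg_A by (intro sum_mono) (simp add: deg_def)
  finally have "card (nbhd X E (A - A')) \<le> card (A - A')"
    by simp
  moreover have "card (nbhd X E A) \<le> card (nbhd X E A') + card (nbhd X E (A - A'))"
    using nbhd_Un[of X E A' "A - A'"] card_Un_le assms(2) by (metis Un_Diff_cancel sup.absorb2)
  moreover have "card A = card A' + card (A - A')"
    using assms(1,2) by (metis card_Diff_subset card_mono finite_subset le_add_diff_inverse)
  ultimately show ?thesis
    unfolding excess_def by linarith
qed

lemma excess_remove_private:
  assumes "finite A" "finite X" "B \<subseteq> A"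
    and private_nbr: "\<And>x. x \<in> B \<Longrightarrow> \<exists>y\<in>X. E x y \<and> (\<forall>x'\<in>A. E x' y \<longrightarrow> x' = x)"
  shows "excess E X A \<le> excess E X (A - B)"
proof -
  obtain p where p: "\<And>x. x \<in> B \<Longrightarrow> p x \<in> X \<and> E x (p x) \<and> (\<forall>x'\<in>A. E x' (p x) \<longrightarrow> x' = x)"
    using private_nbr by metis
  have "inj_on p B"
    using p assms(3) by (metis inj_onI subsetD)
  moreover have "p ` B \<inter> nbhd X E (A - B) = {}"
    using p by (auto simp: nbhd_def)
  moreover have "nbhd X E (A - B) \<union> p ` B \<subseteq> nbhd X E A"
    using p assms(3) by (auto simp: nbhd_def)
  moreover have "finite (nbhd X E A)"
    using assms(2) by (simp add: nbhd_def)
  ultimately have "card (nbhd X E (A - B)) + card B \<le> card (nbhd X E A)"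
    by (metis card_Un_disjoint card_image card_mono finite_Un finite_subset inf_commute)
  moreover have "card A = card (A - B) + card B"
    using assms(1,3) by (metis card_Diff_subset card_mono finite_subset le_add_diff_inverse2)
  ultimately show ?thesis
    unfolding excess_def by linarith
qed

definition pendants_at :: "('a \<Rightarrow> 'a \<Rightarrow> bool) \<Rightarrow> 'a set \<Rightarrow> 'a \<Rightarrow> 'a set" where
  "pendants_at E X w = {x \<in> X. deg E X x = 1 \<and> E x w}"

locale sgraph =
  fixes V :: "'a set" and E :: "'a \<Rightarrow> 'a \<Rightarrow> bool"
  assumes simple: "simple_graph V E"
begin

lemma finite_vertex_subset: "S \<subseteq> V \<Longrightarrow> finite S"
  using simple finite_subset unfolding simple_graph_def by blast

lemma adj_sym: "E v w \<Longrightarrow> E w v"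
  using simple unfolding simple_graph_def by blast

lemma adj_irrefl: "\<not> E v v"
  using simple unfolding simple_graph_def by blast

lemma deg_ne_0: "S \<subseteq> V \<Longrightarrow> y \<in> S \<Longrightarrow> E x y \<Longrightarrow> deg E S x \<noteq> 0"
  using finite_vertex_subset by (auto simp: deg_def)

lemma mem_core_if_adj: "S \<subseteq> V \<Longrightarrow> x \<in> S \<Longrightarrow> y \<in> S \<Longrightarrow> E x y \<Longrightarrow> x \<in> core E S"
  using deg_ne_0[of S y x] by (simp add: mem_core_iff)

lemma deg_core:
  assumes "S \<subseteq> V" "v \<in> S"
  shows "deg E (core E S) v = deg E S v"
proof -
  have "{x \<in> core E S. E v x} = {x \<in> S. E v x}"
    using core_subset[of E S] mem_core_if_adj[OF assms(1) _ assms(2)] adj_sym[of v] by auto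
  then show ?thesis
    by (simp add: deg_def)
qed

lemma deg_mono: "A \<subseteq> B \<Longrightarrow> B \<subseteq> V \<Longrightarrow> deg E A v \<le> deg E B v"
  unfolding deg_def by (rule card_mono) (auto intro: finite_vertex_subset)

lemma deg_le_1_unique:
  assumes "X \<subseteq> V" "deg E X x \<le> 1" "y \<in> X" "E x y" "z \<in> X" "E x z"
  shows "y = z"
proof -
  have "finite {w \<in> X. E x w}"
    using finite_vertex_subset[OF assms(1)] by simp
  moreover have "card {w \<in> X. E x w} \<le> Suc 0"
    using assms(2) by (simp add: deg_def)
  ultimately show ?thesis
    using assms(3-6) card_le_Suc0_iff_eq by blast
qed

lemma dlt_ge_1:
  assumes "S \<subseteq> V" "core E S \<noteq> {}"
  shows "1 \<le> dlt E S"
proof -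
  have "finite (core E S)"
    using core_subset[of E S] assms(1) finite_vertex_subset by blast
  moreover have "deg E (core E S) v \<noteq> 0" if "v \<in> core E S" for v
    using that deg_core[OF assms(1)] core_subset[of E S] mem_core_iff[of v E S] by auto
  ultimately show ?thesis
    using assms(2) by (simp add: dlt_def Min_ge_iff Suc_le_eq)
qed

context
  fixes C :: "'a set" and u w :: 'a
  assumes C_sub: "C \<subseteq> V" and u_in: "u \<in> C" and u_nbhd: "{x \<in> C. E u x} = {w}"
begin

lemma leaf_edge: "w \<in> C" "E u w" "u \<noteq> w"
  using u_nbhd adj_irrefl by blast+

lemma deg_leaf: "deg E C u = 1"
  using u_nbhd by (simp add: deg_def)

lemma leaf_in_pendants_at: "u \<in> pendants_at E C w"
  using u_in deg_leaf leaf_edge by (simp add: pendants_at_def)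

lemma card_pendants_at_le_mnum:
  "int (card (pendants_at E C w)) - 1 \<le> int (mnum E (C - {u, w}))"
proof -
  have "pendants_at E C w - {u} \<subseteq> isol E (C - {u, w})"
  proof
    fix x assume x: "x \<in> pendants_at E C w - {u}"
    then have xC: "x \<in> C" and deg_x: "deg E C x \<le> 1" and xw: "E x w"
      by (auto simp: pendants_at_def)
    have "x \<noteq> w"
      using xw adj_irrefl by blast
    moreover have "{y \<in> C - {u, w}. E x y} = {}"
      using deg_le_1_unique[OF C_sub deg_x _ _ leaf_edge(1) xw] by blast
    then have "deg E (C - {u, w}) x = 0"
      by (metis card.empty deg_def)
    ultimately show "x \<in> isol E (C - {u, w})"
      using x xC by (simp add: isol_def)
  qed
  moreover have "finite (isol E (C - {u, w}))"
    using finite_vertex_subset[OF C_sub] by (simp add: isol_def)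
  ultimately have "card (pendants_at E C w - {u}) \<le> mnum E (C - {u, w})"
    unfolding mnum_def by (rule card_mono[rotated])
  moreover have "finite (pendants_at E C w)"
    using finite_vertex_subset[OF C_sub] by (simp add: pendants_at_def)
  ultimately show ?thesis
    using leaf_in_pendants_at by (simp add: card_Diff_singleton)
qed

lemma nbhd_pendants_at: "nbhd C E (pendants_at E C w) = {w}"
proof
  show "nbhd C E (pendants_at E C w) \<subseteq> {w}"
    using deg_le_1_unique[OF C_sub _ _ _ leaf_edge(1)] by (force simp: nbhd_def pendants_at_def)
  show "{w} \<subseteq> nbhd C E (pendants_at E C w)"
    using leaf_edge leaf_in_pendants_at by (auto simp: nbhd_def)
qed

lemma excess_split_pendants_at:
  "excess E C (P_set C E)
     \<le> excess E C (P_set C E - pendants_at E C w) + int (card (pendants_at E C w)) - 1"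
proof (cases "P_set C E \<inter> pendants_at E C w = {}")
  case True
  moreover have "card (pendants_at E C w) \<noteq> 0"
    using leaf_in_pendants_at finite_vertex_subset[OF C_sub] by (auto simp: pendants_at_def)
  ultimately show ?thesis
    by (simp add: Diff_triv)
next
  case False
  then obtain x y where x: "x \<in> C" "deg E C x = 1" "E x w" and y: "y \<in> C" "E x y" "2 \<le> deg E C y"
    by (auto simp: P_set_def pendants_at_def)
  have "2 \<le> deg E C w"
    using deg_le_1_unique[OF C_sub _ y(1,2) leaf_edge(1) x(3)] x(2) y(3) by simp
  then have sub: "pendants_at E C w \<subseteq> P_set C E"
    using leaf_edge(1) by (auto simp: P_set_def pendants_at_def)
  have "w \<notin> nbhd C E (P_set C E - pendants_at E C w)"
    by (auto simp: nbhd_def P_set_def pendants_at_def)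
  moreover have "nbhd C E (P_set C E) = insert w (nbhd C E (P_set C E - pendants_at E C w))"
    using sub nbhd_Un[of C E "P_set C E - pendants_at E C w" "pendants_at E C w"] nbhd_pendants_at
    by (metis Diff_partition Un_commute insert_is_Un)
  moreover have "finite (nbhd C E (P_set C E - pendants_at E C w))" "finite (P_set C E)"
    using finite_vertex_subset[OF C_sub] by (simp_all add: nbhd_def P_set_def)
  ultimately show ?thesis
    using card_Diff_subset[OF finite_subset[OF sub] sub] card_mono[OF _ sub]
    by (simp add: excess_def)
qed

lemma pendant_off_leaf:
  assumes "x \<in> P_set C E - pendants_at E C w" "y \<in> C" "E x y"
  shows "x \<in> C - {u, w}" "y \<in> C - {u, w}" "deg E C x = 1"
proof -
  obtain y' where x: "x \<in> C" "deg E C x = 1" and y': "y' \<in> C" "E x y'" "2 \<le> deg E C y'"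
    using assms(1) by (auto simp: P_set_def)
  have "y' = y"
    using deg_le_1_unique[OF C_sub _ y'(1,2) assms(2,3)] x(2) by simp
  have "\<not> E x w"
    using assms(1) x by (simp add: pendants_at_def)
  then have "y \<noteq> w"
    using assms(3) by blast
  moreover have "y \<noteq> u"
    using \<open>y' = y\<close> y'(3) deg_leaf by auto
  moreover have "x \<noteq> w"
  proof
    assume "x = w"
    then have "E x u"
      using adj_sym[OF leaf_edge(2)] by simp
    then show False
      using deg_le_1_unique[OF C_sub _ u_in _ assms(2,3)] x(2) \<open>y \<noteq> u\<close> by auto
  qed
  moreover have "x \<noteq> u"
    using \<open>\<not> E x w\<close> leaf_edge(2) by blast
  ultimately show "x \<in> C - {u, w}" "y \<in> C - {u, w}" "deg E C x = 1"
    using x assms(2) by auto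
qed

lemma pendant_off_leaf_private:
  assumes x: "x \<in> P_set C E - pendants_at E C w - P_set (core E (C - {u, w})) E"
    and y: "y \<in> C" "E x y"
    and x': "x' \<in> P_set C E - pendants_at E C w" "E x' y"
  shows "x' = x"
proof -
  let ?D = "C - {u, w}"
  have D_sub: "?D \<subseteq> V"
    using C_sub by blast
  have xD: "x \<in> ?D" and yD: "y \<in> ?D" and deg_x: "deg E C x = 1"
    using pendant_off_leaf[OF _ y] x by auto
  have x'D: "x' \<in> ?D"
    using pendant_off_leaf[OF x'(1) y(1) x'(2)] by simp
  have x_core: "x \<in> core E ?D" and y_core: "y \<in> core E ?D"
    using mem_core_if_adj[OF D_sub] xD yD y(2) adj_sym by blast+
  have "deg E (core E ?D) x \<le> 1"
    using deg_mono[OF _ C_sub, of "core E ?D" x] core_subset[of E ?D] deg_x by auto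
  moreover have "deg E (core E ?D) x \<noteq> 0"
    using deg_ne_0[OF _ y_core y(2)] core_subset[of E ?D] D_sub by blast
  ultimately have "deg E (core E ?D) x = 1"
    by simp
  \<comment> \<open>x has stopped being pendant, so its neighbour y has become a leaf of ?D\<close>
  then have "\<not> 2 \<le> deg E (core E ?D) y"
    using x x_core y_core y(2) by (auto simp: P_set_def)
  then have "deg E ?D y \<le> 1"
    using deg_core[OF D_sub yD] by simp
  then show ?thesis
    using deg_le_1_unique[OF D_sub _ x'D adj_sym[OF x'(2)] xD adj_sym[OF y(2)]] by simp
qed

lemma nbhd_pendants_off_leaf:
  assumes "A \<subseteq> P_set C E - pendants_at E C w"
  shows "nbhd (core E (C - {u, w})) E A = nbhd C E A"
proof
  show "nbhd (core E (C - {u, w})) E A \<subseteq> nbhd C E A"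
    using core_subset[of E "C - {u, w}"] by (auto simp: nbhd_def)
  show "nbhd C E A \<subseteq> nbhd (core E (C - {u, w})) E A"
  proof
    fix z assume "z \<in> nbhd C E A"
    then obtain x where "x \<in> A" "z \<in> C" "E x z"
      by (auto simp: nbhd_def)
    moreover from this have "x \<in> C - {u, w}" "z \<in> C - {u, w}"
      using pendant_off_leaf assms by blast+
    ultimately show "z \<in> nbhd (core E (C - {u, w})) E A"
      using mem_core_if_adj[of "C - {u, w}" z x] C_sub adj_sym by (auto simp: nbhd_def)
  qed
qed

lemma excess_le_leaf_deletion:
  "excess E C (P_set C E)
     \<le> int (mnum E (C - {u, w})) + excess E (core E (C - {u, w})) (P_set (core E (C - {u, w})) E)"
proof -
  define Q where "Q = P_set C E - pendants_at E C w"
  define C' where "C' = core E (C - {u, w})"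
  have fin_C: "finite C"
    using finite_vertex_subset[OF C_sub] .
  have "C' \<subseteq> V"
    using C_sub core_subset[of E "C - {u, w}"] by (auto simp: C'_def)
  then have fin_P': "finite (P_set C' E)"
    using finite_vertex_subset by (simp add: P_set_def)
  have "excess E C Q \<le> excess E C (Q - (Q - P_set C' E))"
  proof (rule excess_remove_private)
    show "finite Q"
      using fin_C by (simp add: Q_def P_set_def)
    fix x assume "x \<in> Q - P_set C' E"
    then obtain y where "y \<in> C" "E x y"
      by (auto simp: Q_def P_set_def)
    then show "\<exists>y\<in>C. E x y \<and> (\<forall>x'\<in>Q. E x' y \<longrightarrow> x' = x)"
      using pendant_off_leaf_private \<open>x \<in> Q - P_set C' E\<close> by (auto simp: Q_def C'_def)
  qed (use fin_C in auto)
  also have "\<dots> = excess E C' (Q \<inter> P_set C' E)"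
    using nbhd_pendants_off_leaf[of "Q \<inter> P_set C' E"]
    by (simp add: excess_def Q_def C'_def Diff_Diff_Int Int_commute)
  also have "\<dots> \<le> excess E C' (P_set C' E)"
    using fin_P' by (intro excess_mono) (auto simp: P_set_def)
  finally show ?thesis
    using excess_split_pendants_at card_pendants_at_le_mnum by (simp add: Q_def C'_def)
qed

end

lemma P_set_core_terminal:
  assumes "S \<subseteq> V" "terminal E S"
  shows "P_set (core E S) E = {}"
proof -
  have "deg E (core E S) v = card (core E S) - 1" if "v \<in> core E S" for v
  proof -
    have "{x \<in> core E S. E v x} = core E S - {v}"
      using terminal_clique[OF assms(2) that] that adj_irrefl by auto
    then show ?thesis
      using that finite_vertex_subset[of "core E S"] assms(1) core_subset[of E S]
      by (simp add: deg_def)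
  qed
  then show ?thesis
    by (force simp: P_set_def)
qed

end

definition delta_run :: "('a \<Rightarrow> 'a \<Rightarrow> bool) \<Rightarrow> 'a set list \<Rightarrow> bool" where
  "delta_run E Ss \<longleftrightarrow> Ss \<noteq> []
     \<and> (\<forall>k. Suc k < length Ss \<longrightarrow> \<not> terminal E (Ss ! k) \<and> dstep E (Ss ! k) (Ss ! Suc k))
     \<and> terminal E (last Ss)"

definition yval :: "('a \<Rightarrow> 'a \<Rightarrow> bool) \<Rightarrow> 'a set \<Rightarrow> int" where
  "yval E S = int (mnum E S) + 1 - int (dlt E S)"

lemma delta_run_singleton [simp]: "delta_run E [S] \<longleftrightarrow> terminal E S"
  by (simp add: delta_run_def)

lemma delta_run_Cons_Cons:
  "delta_run E (S # S' # Ss) \<longleftrightarrow> \<not> terminal E S \<and> dstep E S S' \<and> delta_run E (S' # Ss)"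
  by (simp add: delta_run_def All_less_Suc2)

lemma delta_seq_iff:
  "delta_seq V E Ss \<longleftrightarrow>
     1 \<le> dlt E V \<and> dlt E V + 2 \<le> card V \<and> 2 \<le> length Ss \<and> hd Ss = V \<and> delta_run E Ss"
  by (cases Ss) (auto simp: delta_seq_def delta_run_def)

lemma dstep_subset: "dstep E S S' \<Longrightarrow> S' \<subseteq> S"
  using core_subset by (fastforce simp: dstep_def)

lemma delta_run_subset: "delta_run E (S # Ss) \<Longrightarrow> T \<in> set Ss \<Longrightarrow> T \<subseteq> S"
proof (induction Ss arbitrary: S)
  case (Cons S' Ss)
  then show ?case
    using dstep_subset by (fastforce simp: delta_run_Cons_Cons)
qed simp

lemma ztil_Cons:
  "n \<le> length Ss \<Longrightarrow> ztil E (S # Ss) (Suc n) = sum_list (map (yval E) (take n Ss))"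
proof (induction n)
  case (Suc n)
  have "ztil E (S # Ss) (Suc (Suc n)) = ztil E (S # Ss) (Suc n) + ytil E (S # Ss) (Suc (Suc n))"
    by (simp add: ztil_def)
  with Suc show ?case
    by (simp add: ytil_def yval_def take_Suc_conv_app_nth)
qed (simp add: ztil_def)

locale acyclic_graph = sgraph +
  assumes acyclic: "\<nexists>cs. is_cycle V E cs"
begin

lemma path_neighbour_is_next:
  assumes path: "distinct (v # p)" "set (v # p) \<subseteq> V" "successively E (v # p)"
    and y: "y \<in> set p" "E v y"
  shows "y = hd p"
proof (rule ccontr)
  assume "y \<noteq> hd p"
  obtain i where i: "i < length p" "p ! i = y"
    using y(1) by (auto simp: in_set_conv_nth)
  with \<open>y \<noteq> hd p\<close> have "i \<noteq> 0"
    by (cases p) (auto simp: nth_Cons' split: if_splits)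
  have "is_cycle V E (v # take (Suc i) p)"
    unfolding is_cycle_iff
  proof (intro conjI)
    show "3 \<le> length (v # take (Suc i) p)"
      using i \<open>i \<noteq> 0\<close> by simp
    show "distinct (v # take (Suc i) p)"
      using path(1) set_take_subset[of "Suc i" p] by auto
    show "set (v # take (Suc i) p) \<subseteq> V"
      using path(2) set_take_subset[of "Suc i" p] by auto
    show "successively E (v # take (Suc i) p)"
      using successively_take[OF path(3), of "Suc (Suc i)"] by simp
    show "E (last (v # take (Suc i) p)) (hd (v # take (Suc i) p))"
      using i y(2) by (simp add: take_Suc_conv_app_nth adj_sym)
  qed
  with acyclic show False
    by blast
qed

lemma exists_deg_le_1:
  assumes X: "X \<subseteq> V" "X \<noteq> {}"
  shows "\<exists>v\<in>X. deg E X v \<le> 1"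
proof (rule ccontr)
  assume "\<not> ?thesis"
  then have deg_ge_2: "2 \<le> deg E X v" if "v \<in> X" for v
    using that by force
  define paths where "paths = {q. q \<noteq> [] \<and> distinct q \<and> set q \<subseteq> X \<and> successively E q}"
  obtain x where "x \<in> X"
    using X(2) by blast
  then have "[x] \<in> paths"
    by (simp add: paths_def)
  moreover have "length q < Suc (card X)" if "q \<in> paths" for q
  proof -
    have "length q = card (set q)" "set q \<subseteq> X"
      using that distinct_card[of q] by (auto simp: paths_def)
    then show ?thesis
      using card_mono[OF finite_vertex_subset[OF X(1)], of "set q"] by simp
  qed
  ultimately obtain q where "q \<in> paths" and longest: "\<And>q'. q' \<in> paths \<Longrightarrow> length q' \<le> length q"
    using ex_has_greatest_nat[of "\<lambda>q. q \<in> paths" "[x]" length "Suc (card X)"] by blast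
  then obtain v p where q: "q = v # p" and path: "distinct (v # p)" "set (v # p) \<subseteq> X"
    "successively E (v # p)"
    by (auto simp: paths_def neq_Nil_conv)
  have "2 \<le> card {y \<in> X. E v y}"
    using deg_ge_2 path(2) by (simp add: deg_def)
  then have "\<not> {y \<in> X. E v y} \<subseteq> {hd p}"
    using card_mono[of "{hd p}" "{y \<in> X. E v y}"] by auto
  then obtain y where y: "y \<in> X" "E v y" "y \<noteq> hd p"
    by blast
  have "y \<notin> set p"
    using path_neighbour_is_next[OF path(1) _ path(3) _ y(2)] path(2) X(1) y(3) by blast
  moreover have "y \<noteq> v"
    using y(2) adj_irrefl by blast
  ultimately have "y # q \<in> paths"
    using path y by (simp add: paths_def q adj_sym)
  then show False
    using longest by fastforce
qed

lemma dlt_le_1: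
  assumes "S \<subseteq> V"
  shows "dlt E S \<le> 1"
proof (cases "core E S = {}")
  case False
  have core_V: "core E S \<subseteq> V"
    using core_subset[of E S] assms by (rule order_trans)
  then obtain v where "v \<in> core E S" "deg E (core E S) v \<le> 1"
    using exists_deg_le_1[OF _ False] by blast
  moreover have "finite (core E S)"
    using finite_vertex_subset[OF core_V] .
  ultimately have "Min (deg E (core E S) ` core E S) \<le> 1"
    using Min_le[of "deg E (core E S) ` core E S"] by (meson finite_imageI imageI order_trans)
  then show ?thesis
    using False by (simp add: dlt_def)
qed (simp add: dlt_def)

lemma yval_ge_mnum:
  assumes "S \<subseteq> V"
  shows "int (mnum E S) \<le> yval E S"
  using dlt_le_1[OF assms] by (simp add: yval_def)

lemma not_terminal_if_card_core_ge_3: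
  assumes "S \<subseteq> V" "3 \<le> card (core E S)"
  shows "\<not> terminal E S"
proof
  assume S: "terminal E S"
  obtain T where "T \<subseteq> core E S" "card T = 3"
    using obtain_subset_with_card_n[OF assms(2)] by metis
  then obtain a b c where "a \<in> core E S" "b \<in> core E S" "c \<in> core E S"
    "a \<noteq> b" "b \<noteq> c" "a \<noteq> c"
    by (auto simp: card_3_iff)
  then have "is_cycle V E [a, b, c]"
    using terminal_clique[OF S] core_subset[of E S] assms(1)
    by (auto simp: is_cycle_iff)
  with acyclic show False
    by blast
qed

lemma exists_leaf_deletion_step:
  assumes S: "S \<subseteq> V" "S \<noteq> {}" "\<not> terminal E S"
  obtains u w where "u \<in> core E S" "{x \<in> core E S. E u x} = {w}"
    "dstep E S (core E S - {u, w})" "core E S - {u, w} \<noteq> {}"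
proof -
  let ?C = "core E S"
  have C_ne: "?C \<noteq> {}"
    using S(2,3) by (auto simp: terminal_def)
  have C_sub: "?C \<subseteq> V"
    using S(1) core_subset[of E S] by blast
  have "dlt E S = 1"
    using dlt_le_1[OF S(1)] dlt_ge_1[OF S(1) C_ne] by simp
  moreover have "dlt E S \<in> deg E ?C ` ?C"
    using C_ne finite_vertex_subset[OF C_sub] by (simp add: dlt_def)
  ultimately obtain u where u: "u \<in> ?C" "deg E ?C u = dlt E S" "card {x \<in> ?C. E u x} = 1"
    by (auto simp: deg_def)
  then obtain w where w: "{x \<in> ?C. E u x} = {w}"
    by (auto simp: card_1_singleton_iff)
  have "?C - {u, w} \<noteq> {}"
  proof
    assume "?C - {u, w} = {}"
    then have "?C = {u, w}"
      using u(1) w by blast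
    moreover have "u \<noteq> w"
      using w adj_irrefl by blast
    ultimately have "terminal E S"
      using w adj_sym by (auto simp: terminal_def)
    with S(3) show False ..
  qed
  moreover have "dstep E S (?C - {u, w})"
    using u w by (auto simp: dstep_def)
  ultimately show ?thesis
    using that u(1) w by blast
qed

lemma delta_run_exists:
  assumes "S \<subseteq> V" "S \<noteq> {}"
  shows "\<exists>Ss. delta_run E (S # Ss)
    \<and> excess E (core E S) (P_set (core E S) E) \<le> sum_list (map (yval E) Ss)"
  using assms
proof (induction "card S" arbitrary: S rule: less_induct)
  case less
  show ?case
  proof (cases "terminal E S")
    case True
    then show ?thesis
      using P_set_core_terminal[OF less.prems(1)]
      by (intro exI[of _ "[]"]) (simp add: excess_def nbhd_def)
  next
    case False
    with less.prems obtain u w where u: "u \<in> core E S" "{x \<in> core E S. E u x} = {w}"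
      and step: "dstep E S (core E S - {u, w})" and ne: "core E S - {u, w} \<noteq> {}"
      by (rule exists_leaf_deletion_step)
    let ?S' = "core E S - {u, w}"
    have C_sub: "core E S \<subseteq> V"
      using less.prems(1) core_subset[of E S] by blast
    then have S'_sub: "?S' \<subseteq> V"
      by blast
    have "card ?S' < card S"
      using u(1) core_subset[of E S] finite_vertex_subset[OF less.prems(1)]
      by (intro psubset_card_mono) auto
    then obtain Ss where run: "delta_run E (?S' # Ss)"
      and sum: "excess E (core E ?S') (P_set (core E ?S') E) \<le> sum_list (map (yval E) Ss)"
      using less.hyps S'_sub ne by blast
    have "excess E (core E S) (P_set (core E S) E)
        \<le> int (mnum E ?S') + excess E (core E ?S') (P_set (core E ?S') E)"
      using excess_le_leaf_deletion[OF C_sub u] .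
    also have "\<dots> \<le> sum_list (map (yval E) (?S' # Ss))"
      using yval_ge_mnum[OF S'_sub] sum by simp
    finally show ?thesis
      using False step run by (intro exI[of _ "?S' # Ss"]) (simp add: delta_run_Cons_Cons)
  qed
qed

lemma sum_yval_nonneg:
  assumes "S \<subseteq> V" "delta_run E (S # Ss)"
  shows "0 \<le> sum_list (map (yval E) (take n Ss))"
proof (rule sum_list_nonneg)
  fix y assume "y \<in> set (map (yval E) (take n Ss))"
  then obtain T where "T \<in> set Ss" "y = yval E T"
    using in_set_takeD by fastforce
  then show "0 \<le> y"
    using yval_ge_mnum delta_run_subset[OF assms(2)] assms(1) by force
qed

end

theorem mainTheorem6:
  fixes V :: "'a set" and E :: "'a \<Rightarrow> 'a \<Rightarrow> bool"
  assumes "forest V E"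
    and "\<forall>v \<in> V. deg E V v \<ge> 1"
    and "card V \<ge> 3"
  shows "\<exists>Ss. delta_seq V E Ss
           \<and> (\<forall>i \<in> {2..length Ss}. ztil E Ss i \<ge> 0)
           \<and> ztil E Ss (length Ss) \<ge> int (card (P_set V E)) - int (card (nbhd V E (P_set V E)))"
proof -
  interpret acyclic_graph V E
    using assms(1) by unfold_locales (auto simp: forest_def)
  have core_V: "core E V = V"
    using assms(2) by (auto simp: core_def isol_def)
  obtain Ss where run: "delta_run E (V # Ss)"
    and sum: "excess E V (P_set V E) \<le> sum_list (map (yval E) Ss)"
    using delta_run_exists[of V] assms(3) core_V by force
  have "\<not> terminal E V"
    using not_terminal_if_card_core_ge_3[of V] core_V assms(3) by simp
  with run have "Ss \<noteq> []"
    by auto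
  moreover have "dlt E V = 1"
    using dlt_le_1[of V] dlt_ge_1[of V] core_V assms(3) by fastforce
  ultimately have "delta_seq V E (V # Ss)"
    using run assms(3) by (simp add: delta_seq_iff Suc_le_eq)
  moreover have "0 \<le> ztil E (V # Ss) i" if "i \<in> {2..length (V # Ss)}" for i
    using that ztil_Cons[of "i - 1" Ss E V] sum_yval_nonneg[OF subset_refl run] by (cases i) auto
  moreover have "ztil E (V # Ss) (length (V # Ss)) = sum_list (map (yval E) Ss)"
    using ztil_Cons[of "length Ss" Ss E V] by simp
  ultimately show ?thesis
    using sum by (intro exI[of _ "V # Ss"]) (simp add: excess_def)
qed

end
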